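(* Let $T=T(n,a,b)$ with $a\ge 0$, $b\ge a+2$ and $2(a+b)<n-1$, and let $\ell=n-a-b$ and $r=\ell-b-a$. If $b<\frac{\ell}{2}$, then $$\rho(T)>(2a+1)(r-1)+\frac{r}{r-1}\sum_{i=1}^{\lfloor\frac{r-1}{2}\rfloor}(r-2i).$$
   Context: Hypergraphs have edges that are vertex subsets of size at least two; distance $d_T(u,v)$ in a hypertree is the length of a shortest loose path (an alternating sequence of distinct vertices and distinct edges $(v_0,e_1,v_1,\dots,e_p,v_p)$ with $v_{i-1},v_i\in e_i$ and non-consecutive edges disjoint). $\rho(T)$ is the largest eigenvalue of the distance matrix $D(T)=(d_T(u,v))_{u,v}$. For integers $n,a,b$ with $0\le a\le b$ and $a+b\le\lfloor\frac{n-1}{2}\rfloor$, put $\ell=n-a-b$ and $I=\{1,\dots,a\}\cup\{\ell-b,\dots,\ell-1\}$; $T(n,a,b)$ is the hypertree with vertex set $\{v_1,\dots,v_\ell\}\cup\{w_i:i\in I\}$ and edges $\{v_i,w_i,v_{i+1}\}$ for $i\in I$ and $\{v_i,v_{i+1}\}$ for $i\in\{1,\dots,\ell-1\}\setminus I$. *)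

theory Defs
  imports Complex_Main
begin

text \<open>A loose path of length p: vertices vs = [v_0,...,v_p] (distinct), edges es = [e_1,...,e_p]
(distinct, indexed 0..p-1 in the list), with v_{i-1}, v_i in e_i and non-consecutive
edges disjoint.\<close>
definition loose_path :: "'a set set \<Rightarrow> 'a list \<Rightarrow> 'a set list \<Rightarrow> bool" where
  "loose_path E vs es \<longleftrightarrow>
     length vs = Suc (length es) \<and> distinct vs \<and> distinct es \<and> set es \<subseteq> E \<and>
     (\<forall>i < length es. vs ! i \<in> es ! i \<and> vs ! Suc i \<in> es ! i) \<and>
     (\<forall>i < length es. \<forall>j < length es. Suc i < j \<longrightarrow> es ! i \<inter> es ! j = {})"

definition hdist :: "'a set set \<Rightarrow> 'a \<Rightarrow> 'a \<Rightarrow> nat" where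
  "hdist E u v = (LEAST p. \<exists>vs es. loose_path E vs es \<and> length es = p \<and>
                     hd vs = u \<and> last vs = v)"

definition dist_eigenvalue :: "'a set \<Rightarrow> 'a set set \<Rightarrow> real \<Rightarrow> bool" where
  "dist_eigenvalue V E mu \<longleftrightarrow>
     (\<exists>x :: 'a \<Rightarrow> real. (\<exists>u\<in>V. x u \<noteq> 0) \<and>
        (\<forall>u\<in>V. (\<Sum>v\<in>V. real (hdist E u v) * x v) = mu * x u))"

text \<open>Distance spectral radius: the largest eigenvalue of D(T) (D(T) is real symmetric,
so all eigenvalues are real).\<close>
definition dist_rho :: "'a set \<Rightarrow> 'a set set \<Rightarrow> real" where
  "dist_rho V E = Max {mu. dist_eigenvalue V E mu}"

datatype tvert = Vv nat | Wv nat

definition T_ell :: "nat \<Rightarrow> nat \<Rightarrow> nat \<Rightarrow> nat" where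
  "T_ell n a b = n - a - b"

definition T_I :: "nat \<Rightarrow> nat \<Rightarrow> nat \<Rightarrow> nat set" where
  "T_I n a b = {1..a} \<union> {T_ell n a b - b .. T_ell n a b - 1}"

definition T_verts :: "nat \<Rightarrow> nat \<Rightarrow> nat \<Rightarrow> tvert set" where
  "T_verts n a b = Vv ` {1..T_ell n a b} \<union> Wv ` T_I n a b"

definition T_edges :: "nat \<Rightarrow> nat \<Rightarrow> nat \<Rightarrow> tvert set set" where
  "T_edges n a b =
     (\<lambda>i. {Vv i, Wv i, Vv (Suc i)}) ` T_I n a b \<union>
     (\<lambda>i. {Vv i, Vv (Suc i)}) ` ({1..T_ell n a b - 1} - T_I n a b)"

definition rho_T :: "nat \<Rightarrow> nat \<Rightarrow> nat \<Rightarrow> real" where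
  "rho_T n a b = dist_rho (T_verts n a b) (T_edges n a b)"

end

theory Submission
  imports Defs "Jordan_Normal_Form.Spectral_Radius" "HOL-Analysis.Function_Topology"
begin

text \<open>The distance matrix is symmetric, so its largest eigenvalue dominates every Rayleigh quotient.
Testing with the indicator vector of the spine \<open>v\<^sub>1, \<dots>, v\<^sub>\<ell>\<close> gives
\<open>\<rho>(T) \<ge> (\<Sum>i j. d(v\<^sub>i, v\<^sub>j)) / \<ell> \<ge> (\<Sum>i j. \<bar>i - j\<bar>) / \<ell> = (\<ell>\<^sup>2 - 1) / 3\<close>,
because each edge of a loose path changes the spine index by at most one.
The right-hand side of the claim is at most \<open>(2a + 1)(r - 1) + r(r - 1)/4\<close>, and since
\<open>\<ell> = r + a + b \<ge> r + 2a + 2\<close> this is smaller than \<open>(\<ell>\<^sup>2 - 1) / 3\<close>.\<close>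

section \<open>Eigenvalues and Rayleigh quotients of symmetric kernels\<close>

definition kernel_eigenvalue :: "'a set \<Rightarrow> ('a \<Rightarrow> 'a \<Rightarrow> real) \<Rightarrow> real \<Rightarrow> bool" where
  "kernel_eigenvalue V d \<mu> \<longleftrightarrow>
     (\<exists>x. (\<exists>u\<in>V. x u \<noteq> 0) \<and> (\<forall>u\<in>V. (\<Sum>v\<in>V. d u v * x v) = \<mu> * x u))"

definition bilinear_form ::
    "'a set \<Rightarrow> ('a \<Rightarrow> 'a \<Rightarrow> real) \<Rightarrow> ('a \<Rightarrow> real) \<Rightarrow> ('a \<Rightarrow> real) \<Rightarrow> real" where
  "bilinear_form V d x z = (\<Sum>u\<in>V. \<Sum>v\<in>V. d u v * x u * z v)"

definition sq_norm :: "'a set \<Rightarrow> ('a \<Rightarrow> real) \<Rightarrow> real" where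
  "sq_norm V x = (\<Sum>v\<in>V. (x v)\<^sup>2)"

lemma dist_eigenvalue_eq_kernel_eigenvalue:
  "dist_eigenvalue V E = kernel_eigenvalue V (\<lambda>u v. real (hdist E u v))"
  by (simp add: fun_eq_iff dist_eigenvalue_def kernel_eigenvalue_def)

lemma finite_kernel_eigenvalues:
  assumes "finite V"
  shows "finite (Collect (kernel_eigenvalue V d))"
proof -
  obtain f where f: "bij_betw f {0..<card V} V"
    using ex_bij_betw_nat_finite[OF assms] by blast
  define A where "A = mat (card V) (card V) (\<lambda>(i, j). d (f i) (f j))"
  have A: "A \<in> carrier_mat (card V) (card V)" by (simp add: A_def)
  have "Collect (kernel_eigenvalue V d) \<subseteq> spectrum A"
  proof
    fix \<mu> assume "\<mu> \<in> Collect (kernel_eigenvalue V d)"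
    then obtain x u where u: "u \<in> V" "x u \<noteq> 0"
      and ev: "\<And>u. u \<in> V \<Longrightarrow> (\<Sum>v\<in>V. d u v * x v) = \<mu> * x u"
      by (auto simp: kernel_eigenvalue_def)
    define w where "w = vec (card V) (\<lambda>i. x (f i))"
    have "u \<in> f ` {0..<card V}" using f u(1) by (simp add: bij_betw_def)
    then obtain i where i: "i < card V" "f i = u" by auto
    have "w $ i \<noteq> 0" using i u by (simp add: w_def)
    then have "w \<noteq> 0\<^sub>v (card V)" using i by auto
    moreover have "A *\<^sub>v w = \<mu> \<cdot>\<^sub>v w"
    proof (rule eq_vecI)
      fix k assume "k < dim_vec (\<mu> \<cdot>\<^sub>v w)"
      then have k: "k < card V" by (simp add: w_def)
      have "(A *\<^sub>v w) $ k = (\<Sum>j = 0..<card V. d (f k) (f j) * x (f j))"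
        using k by (simp add: A_def w_def scalar_prod_def)
      also have "\<dots> = (\<Sum>v\<in>V. d (f k) v * x v)"
        using sum.reindex_bij_betw[OF f, of "\<lambda>v. d (f k) v * x v"] by simp
      also have "\<dots> = \<mu> * x (f k)" using ev bij_betwE[OF f] k by simp
      finally show "(A *\<^sub>v w) $ k = (\<mu> \<cdot>\<^sub>v w) $ k" using k by (simp add: w_def)
    qed (simp add: A_def w_def)
    ultimately have "eigenvector A w \<mu>"
      using A by (auto simp: eigenvector_def w_def)
    then show "\<mu> \<in> spectrum A" by (auto simp: spectrum_def eigenvalue_def)
  qed
  then show ?thesis using card_finite_spectrum(1)[OF A] finite_subset by blast
qed

lemma sq_norm_nonneg: "0 \<le> sq_norm V x"
  by (simp add: sq_norm_def sum_nonneg)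

lemma sq_norm_eq_0_iff: "finite V \<Longrightarrow> sq_norm V x = 0 \<longleftrightarrow> (\<forall>v\<in>V. x v = 0)"
  by (simp add: sq_norm_def sum_nonneg_eq_0_iff)

lemma bilinear_form_commute:
  assumes "\<And>u v. u \<in> V \<Longrightarrow> v \<in> V \<Longrightarrow> d u v = d v u"
  shows "bilinear_form V d z x = bilinear_form V d x z"
  unfolding bilinear_form_def
  by (subst sum.swap) (auto intro!: sum.cong simp: assms algebra_simps)

lemma bilinear_form_add_scaled:
  "bilinear_form V d (\<lambda>v. x v + t * z v) (\<lambda>v. x v + t * z v) =
     bilinear_form V d x x + t * (bilinear_form V d x z + bilinear_form V d z x)
     + t\<^sup>2 * bilinear_form V d z z"
  by (simp add: bilinear_form_def sum.distrib sum_distrib_left power2_eq_square algebra_simps)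

lemma sq_norm_add_scaled:
  "sq_norm V (\<lambda>v. x v + t * z v) = sq_norm V x + 2 * t * (\<Sum>v\<in>V. x v * z v) + t\<^sup>2 * sq_norm V z"
  by (simp add: sq_norm_def sum.distrib sum_distrib_left power2_eq_square algebra_simps)

text \<open>Vectors are functions on the whole type \<open>'a\<close>; requiring them to vanish off \<open>V\<close> makes the
unit sphere compact in the product topology even when \<open>'a\<close> is infinite.\<close>

lemma compact_unit_sphere:
  assumes "finite V"
  shows "compact {x. sq_norm V x = 1 \<and> (\<forall>v. v \<notin> V \<longrightarrow> x v = 0)}"
proof -
  define S where "S v = (if v \<in> V then {-1..1} else {0::real})" for v
  have "compactin (product_topology (\<lambda>_. euclidean) UNIV) (PiE UNIV S)"
    unfolding compactin_PiE by (auto simp: S_def)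
  then have "compact (PiE UNIV S)"
    unfolding euclidean_product_topology by simp
  moreover have "closed {x. sq_norm V x = 1}"
    unfolding sq_norm_def
    by (intro closed_Collect_eq continuous_intros continuous_on_product_coordinates)
  moreover have "{x. sq_norm V x = 1 \<and> (\<forall>v. v \<notin> V \<longrightarrow> x v = 0)} = PiE UNIV S \<inter> {x. sq_norm V x = 1}"
  proof -
    have "\<bar>x v\<bar> \<le> 1" if "sq_norm V x = 1" "v \<in> V" for x v
    proof -
      have "(x v)\<^sup>2 \<le> 1\<^sup>2"
        using that assms member_le_sum[of v V "\<lambda>v. (x v)\<^sup>2"] by (simp add: sq_norm_def)
      then show ?thesis using abs_le_square_iff by (metis abs_one)
    qed
    then show ?thesis by (auto simp: S_def PiE_iff abs_le_iff split: if_splits)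
  qed
  ultimately show ?thesis by (simp add: compact_Int_closed)
qed

lemma bilinear_form_maximizer:
  assumes fin: "finite V" and "V \<noteq> {}"
  obtains x0 where "sq_norm V x0 = 1"
    and "\<And>z. bilinear_form V d z z \<le> bilinear_form V d x0 x0 * sq_norm V z"
proof -
  define K where "K = {x. sq_norm V x = 1 \<and> (\<forall>v. v \<notin> V \<longrightarrow> x v = 0)}"
  obtain u0 where "u0 \<in> V" using assms by blast
  then have "(\<lambda>v. if v = u0 then 1 else 0) \<in> K"
    using fin by (simp add: K_def sq_norm_def if_distrib[of "\<lambda>x. x\<^sup>2"] cong: if_cong)
  then have "K \<noteq> {}" by blast
  moreover have "continuous_on K (\<lambda>x. bilinear_form V d x x)"
    unfolding bilinear_form_def
    by (intro continuous_intros continuous_on_subset[OF continuous_on_product_coordinates]) auto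
  ultimately obtain x0 where x0: "x0 \<in> K" and max: "\<And>z. z \<in> K \<Longrightarrow> bilinear_form V d z z \<le> bilinear_form V d x0 x0"
    using continuous_attains_sup[OF compact_unit_sphere[OF fin, folded K_def]] by blast
  have bound: "bilinear_form V d z z \<le> bilinear_form V d x0 x0 * sq_norm V z" for z
  proof (cases "sq_norm V z = 0")
    case True
    then have "bilinear_form V d z z = 0" using fin by (simp add: sq_norm_eq_0_iff bilinear_form_def)
    with True show ?thesis by simp
  next
    case False
    then have pos: "sq_norm V z > 0" using sq_norm_nonneg[of V z] by linarith
    define c where "c = 1 / sqrt (sq_norm V z)"
    have c2: "c\<^sup>2 = 1 / sq_norm V z" using pos by (simp add: c_def power_divide)
    define w where "w v = (if v \<in> V then c * z v else 0)" for v
    have Nw: "sq_norm V w = c\<^sup>2 * sq_norm V z"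
      and Qw: "bilinear_form V d w w = c\<^sup>2 * bilinear_form V d z z"
      by (simp_all add: w_def sq_norm_def bilinear_form_def sum_distrib_left power2_eq_square
          algebra_simps)
    have "w \<in> K" using Nw c2 pos by (simp add: K_def w_def)
    then have "c\<^sup>2 * bilinear_form V d z z \<le> bilinear_form V d x0 x0" using max Qw by metis
    then show ?thesis using c2 pos by (simp add: field_simps)
  qed
  have "sq_norm V x0 = 1" using x0 by (simp add: K_def)
  from this bound show thesis by (rule that)
qed

lemma linear_coeff_eq_0_if_quadratic_nonpos:
  fixes B C :: real
  assumes "\<And>t. 2 * t * B + t\<^sup>2 * C \<le> 0"
  shows "B = 0"
proof (rule ccontr)
  assume "B \<noteq> 0"
  define c where "c = \<bar>C\<bar> + 1"
  define t where "t = B / c"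
  have "c > 0" by (simp add: c_def)
  then have tc: "t * c = B" by (simp add: t_def)
  have "(2 * t * B + t\<^sup>2 * C) * c\<^sup>2 = 2 * B * (t * c) * c + (t * c)\<^sup>2 * C"
    by (simp add: power2_eq_square algebra_simps)
  also have "\<dots> = B\<^sup>2 * (2 * c + C)" by (simp only: tc) (simp add: power2_eq_square algebra_simps)
  finally have "(2 * t * B + t\<^sup>2 * C) * c\<^sup>2 = B\<^sup>2 * (2 * c + C)" .
  moreover have "B\<^sup>2 * (2 * c + C) > 0"
    using \<open>B \<noteq> 0\<close> by (intro mult_pos_pos) (auto simp: c_def abs_if)
  moreover have "(2 * t * B + t\<^sup>2 * C) * c\<^sup>2 \<le> 0"
    using assms[of t] by (simp add: mult_nonpos_nonneg)
  ultimately show False by linarith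
qed

text \<open>First variation: moving the maximizer in the direction of a unit vector \<open>e\<^sub>u\<close> cannot increase
the Rayleigh quotient, so the linear term in the step length vanishes.\<close>

lemma eigenvector_of_bilinear_form_maximizer:
  assumes fin: "finite V" and sym: "\<And>u v. u \<in> V \<Longrightarrow> v \<in> V \<Longrightarrow> d u v = d v u"
    and max: "\<And>z. bilinear_form V d z z \<le> \<mu> * sq_norm V z"
    and x0: "sq_norm V x0 = 1" "bilinear_form V d x0 x0 = \<mu>"
    and u: "u \<in> V"
  shows "(\<Sum>v\<in>V. d u v * x0 v) = \<mu> * x0 u"
proof -
  define e :: "'a \<Rightarrow> real" where "e v = (if v = u then 1 else 0)" for v
  have "bilinear_form V d x0 e = (\<Sum>w\<in>V. d w u * x0 w)"
    using fin u by (simp add: bilinear_form_def e_def if_distrib cong: if_cong)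
  also have "\<dots> = (\<Sum>v\<in>V. d u v * x0 v)"
    using u sym by (intro sum.cong) auto
  finally have Le: "bilinear_form V d x0 e = (\<Sum>v\<in>V. d u v * x0 v)" .
  moreover have "bilinear_form V d e x0 = bilinear_form V d x0 e"
    by (rule bilinear_form_commute[OF sym])
  moreover have "(\<Sum>v\<in>V. x0 v * e v) = x0 u"
    using fin u by (simp add: e_def if_distrib cong: if_cong)
  moreover have "sq_norm V e = 1"
    using fin u by (simp add: sq_norm_def e_def if_distrib[of "\<lambda>x. x\<^sup>2"] cong: if_cong)
  ultimately have "bilinear_form V d (\<lambda>v. x0 v + t * e v) (\<lambda>v. x0 v + t * e v)
      = \<mu> + 2 * t * (\<Sum>v\<in>V. d u v * x0 v) + t\<^sup>2 * bilinear_form V d e e"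
    and "sq_norm V (\<lambda>v. x0 v + t * e v) = 1 + 2 * t * x0 u + t\<^sup>2" for t
    using x0 by (simp_all add: bilinear_form_add_scaled sq_norm_add_scaled)
  then have "2 * t * ((\<Sum>v\<in>V. d u v * x0 v) - \<mu> * x0 u) + t\<^sup>2 * (bilinear_form V d e e - \<mu>) \<le> 0" for t
    using max[of "\<lambda>v. x0 v + t * e v"] by (simp add: algebra_simps)
  then show ?thesis using linear_coeff_eq_0_if_quadratic_nonpos by fastforce
qed

lemma kernel_eigenvalue_ge_rayleigh_quotients:
  assumes fin: "finite V" and "V \<noteq> {}"
    and sym: "\<And>u v. u \<in> V \<Longrightarrow> v \<in> V \<Longrightarrow> d u v = d v u"
  obtains \<mu> where "kernel_eigenvalue V d \<mu>" and "\<And>y. bilinear_form V d y y \<le> \<mu> * sq_norm V y"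
proof -
  obtain x0 where x0: "sq_norm V x0 = 1"
    and max: "\<And>z. bilinear_form V d z z \<le> bilinear_form V d x0 x0 * sq_norm V z"
    using bilinear_form_maximizer[OF assms(1,2)] by blast
  have "\<exists>u\<in>V. x0 u \<noteq> 0" using x0 sq_norm_eq_0_iff[OF fin, of x0] by auto
  with eigenvector_of_bilinear_form_maximizer[OF fin sym max x0 refl]
  have "kernel_eigenvalue V d (bilinear_form V d x0 x0)"
    by (auto simp: kernel_eigenvalue_def)
  then show thesis by (rule that[OF _ max])
qed

lemma bilinear_form_le_Max_kernel_eigenvalue:
  assumes "finite V" "V \<noteq> {}" "\<And>u v. u \<in> V \<Longrightarrow> v \<in> V \<Longrightarrow> d u v = d v u"
  shows "bilinear_form V d y y \<le> Max (Collect (kernel_eigenvalue V d)) * sq_norm V y"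
proof (rule kernel_eigenvalue_ge_rayleigh_quotients[OF assms])
  fix \<mu> assume \<mu>: "kernel_eigenvalue V d \<mu>"
    and le: "\<And>y. bilinear_form V d y y \<le> \<mu> * sq_norm V y"
  have "bilinear_form V d y y \<le> \<mu> * sq_norm V y" by (rule le)
  also have "\<mu> * sq_norm V y \<le> Max (Collect (kernel_eigenvalue V d)) * sq_norm V y"
    using \<mu> finite_kernel_eigenvalues[OF assms(1)]
    by (intro mult_right_mono sq_norm_nonneg Max_ge) auto
  finally show ?thesis .
qed

lemma bilinear_form_indicator:
  assumes "finite V" "S \<subseteq> V"
  shows "bilinear_form V d (\<lambda>v. of_bool (v \<in> S)) (\<lambda>v. of_bool (v \<in> S)) = (\<Sum>u\<in>S. \<Sum>v\<in>S. d u v)"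
proof -
  have "bilinear_form V d (\<lambda>v. of_bool (v \<in> S)) (\<lambda>v. of_bool (v \<in> S))
      = (\<Sum>u\<in>V. if u \<in> S then \<Sum>v\<in>V. if v \<in> S then d u v else 0 else 0)"
    by (auto simp: bilinear_form_def intro!: sum.cong)
  also have "\<dots> = (\<Sum>u\<in>S. \<Sum>v\<in>S. d u v)"
    using assms by (simp add: sum.inter_restrict[symmetric] Int_absorb1)
  finally show ?thesis .
qed

lemma sq_norm_indicator:
  assumes "finite V" "S \<subseteq> V"
  shows "sq_norm V (\<lambda>v. of_bool (v \<in> S)) = real (card S)"
proof -
  have "sq_norm V (\<lambda>v. of_bool (v \<in> S)) = (\<Sum>v\<in>V. if v \<in> S then 1 else 0)"
    by (auto simp: sq_norm_def intro!: sum.cong)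
  also have "\<dots> = real (card S)"
    using assms by (simp add: sum.inter_restrict[symmetric] Int_absorb1)
  finally show ?thesis .
qed

section \<open>Distances in hypergraphs\<close>

lemma loose_path_rev:
  assumes "loose_path E vs es"
  shows "loose_path E (rev vs) (rev es)"
proof -
  let ?m = "length es"
  have L: "length vs = Suc ?m" and D: "distinct vs" "distinct es" and S: "set es \<subseteq> E"
    and I: "\<And>i. i < ?m \<Longrightarrow> vs ! i \<in> es ! i \<and> vs ! Suc i \<in> es ! i"
    and J: "\<And>i j. i < ?m \<Longrightarrow> j < ?m \<Longrightarrow> Suc i < j \<Longrightarrow> es ! i \<inter> es ! j = {}"
    using assms unfolding loose_path_def by auto
  have step: "rev vs ! i \<in> rev es ! i \<and> rev vs ! Suc i \<in> rev es ! i" if i: "i < ?m" for i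
  proof -
    have "rev es ! i = es ! (?m - 1 - i)" using i by (simp add: rev_nth)
    moreover have "rev vs ! i = vs ! Suc (?m - 1 - i)" using i L by (simp add: rev_nth Suc_diff_Suc)
    moreover have "rev vs ! Suc i = vs ! (?m - 1 - i)" using i L by (simp add: rev_nth)
    ultimately show ?thesis using I[of "?m - 1 - i"] i by auto
  qed
  have disj: "rev es ! i \<inter> rev es ! j = {}" if "i < ?m" "j < ?m" "Suc i < j" for i j
  proof -
    have "es ! (?m - 1 - j) \<inter> es ! (?m - 1 - i) = {}" using J[of "?m - 1 - j" "?m - 1 - i"] that by auto
    then show ?thesis using that by (simp add: rev_nth Int_commute)
  qed
  show ?thesis
    unfolding loose_path_def by (intro conjI allI impI; simp add: L D S step disj)
qed

lemma hdist_commute: "hdist E u v = hdist E v u"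
proof -
  have "(\<exists>vs es. loose_path E vs es \<and> length es = p \<and> hd vs = u \<and> last vs = v) \<Longrightarrow>
        (\<exists>vs es. loose_path E vs es \<and> length es = p \<and> hd vs = v \<and> last vs = u)" for u v p
  proof (elim exE conjE)
    fix vs es assume "loose_path E vs es" "length es = p" "hd vs = u" "last vs = v"
    moreover have "vs \<noteq> []" using \<open>loose_path E vs es\<close> by (auto simp: loose_path_def)
    ultimately show ?thesis
      by (intro exI[of _ "rev vs"] exI[of _ "rev es"]) (simp add: loose_path_rev hd_rev last_rev)
  qed
  then have "(\<exists>vs es. loose_path E vs es \<and> length es = p \<and> hd vs = u \<and> last vs = v) \<longleftrightarrow>
        (\<exists>vs es. loose_path E vs es \<and> length es = p \<and> hd vs = v \<and> last vs = u)" for p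
    by blast
  then show ?thesis unfolding hdist_def by simp
qed

lemma potential_diff_le_length_loose_path:
  fixes f :: "'a \<Rightarrow> int"
  assumes lp: "loose_path E vs es"
    and edges: "\<And>e x y. e \<in> E \<Longrightarrow> x \<in> e \<Longrightarrow> y \<in> e \<Longrightarrow> \<bar>f x - f y\<bar> \<le> 1"
  shows "\<bar>f (last vs) - f (hd vs)\<bar> \<le> int (length es)"
proof -
  have L: "length vs = Suc (length es)" and S: "set es \<subseteq> E"
    and I: "\<And>i. i < length es \<Longrightarrow> vs ! i \<in> es ! i \<and> vs ! Suc i \<in> es ! i"
    using lp unfolding loose_path_def by auto
  have "\<bar>f (vs ! m) - f (vs ! 0)\<bar> \<le> int m" if "m \<le> length es" for m
    using that
  proof (induction m)
    case (Suc m)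
    have "m < length es" using Suc.prems by simp
    then have "es ! m \<in> E" using S by auto
    then have "\<bar>f (vs ! Suc m) - f (vs ! m)\<bar> \<le> 1"
      using edges I[OF \<open>m < length es\<close>] by blast
    moreover have "\<bar>f (vs ! m) - f (vs ! 0)\<bar> \<le> int m" using Suc by simp
    ultimately show ?case by simp
  qed simp
  from this[of "length es"] have "\<bar>f (vs ! length es) - f (vs ! 0)\<bar> \<le> int (length es)" by simp
  moreover have "vs \<noteq> []" using L by auto
  ultimately show ?thesis using L by (simp add: hd_conv_nth last_conv_nth)
qed

lemma potential_diff_le_hdist:
  fixes f :: "'a \<Rightarrow> int"
  assumes "loose_path E vs es" "hd vs = u" "last vs = v"
    and "\<And>e x y. e \<in> E \<Longrightarrow> x \<in> e \<Longrightarrow> y \<in> e \<Longrightarrow> \<bar>f x - f y\<bar> \<le> 1"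
  shows "\<bar>f v - f u\<bar> \<le> int (hdist E u v)"
proof -
  have "\<exists>p vs es. loose_path E vs es \<and> length es = p \<and> hd vs = u \<and> last vs = v"
    using assms by blast
  from LeastI_ex[OF this] obtain vs' es' where
    lp: "loose_path E vs' es'" and "length es' = hdist E u v" "hd vs' = u" "last vs' = v"
    unfolding hdist_def by blast
  with potential_diff_le_length_loose_path[OF lp assms(4)] show ?thesis by simp
qed

section \<open>The spine of \<open>T(n, a, b)\<close>\<close>

fun tvert_index :: "tvert \<Rightarrow> nat" where
  "tvert_index (Vv k) = k"
| "tvert_index (Wv k) = k"

definition T_edge :: "nat \<Rightarrow> nat \<Rightarrow> nat \<Rightarrow> nat \<Rightarrow> tvert set" where
  "T_edge n a b k = (if k \<in> T_I n a b then {Vv k, Wv k, Vv (Suc k)} else {Vv k, Vv (Suc k)})"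

lemma T_edge_in_T_edges: "1 \<le> k \<Longrightarrow> k < T_ell n a b \<Longrightarrow> T_edge n a b k \<in> T_edges n a b"
  unfolding T_edge_def T_edges_def by auto

lemma T_edges_index_diff_le_1:
  "e \<in> T_edges n a b \<Longrightarrow> x \<in> e \<Longrightarrow> y \<in> e \<Longrightarrow> \<bar>int (tvert_index x) - int (tvert_index y)\<bar> \<le> 1"
  unfolding T_edges_def by auto

lemma T_spine_loose_path:
  assumes "1 \<le> i" "i \<le> j" "j \<le> T_ell n a b"
  shows "loose_path (T_edges n a b) (map Vv [i..<Suc j]) (map (T_edge n a b) [i..<j])"
proof -
  have "inj_on (T_edge n a b) {i..<j}"
  proof (rule inj_onI)
    fix k m assume "T_edge n a b k = T_edge n a b m"
    then have "Vv k \<in> T_edge n a b m" "Vv m \<in> T_edge n a b k"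
      unfolding T_edge_def by (auto split: if_splits)
    then show "k = m" unfolding T_edge_def by (auto split: if_splits)
  qed
  then have "distinct (map (T_edge n a b) [i..<j])" by (simp add: distinct_map)
  moreover have "distinct (map Vv [i..<Suc j])" by (simp add: distinct_map inj_on_def)
  moreover have "set (map (T_edge n a b) [i..<j]) \<subseteq> T_edges n a b"
    using assms by (auto intro!: T_edge_in_T_edges)
  moreover have "\<forall>p < j - i. map Vv [i..<Suc j] ! p \<in> map (T_edge n a b) [i..<j] ! p \<and>
      map Vv [i..<Suc j] ! Suc p \<in> map (T_edge n a b) [i..<j] ! p"
    by (auto simp: T_edge_def nth_append)
  moreover have "\<forall>p < j - i. \<forall>q < j - i. Suc p < q \<longrightarrow>
      map (T_edge n a b) [i..<j] ! p \<inter> map (T_edge n a b) [i..<j] ! q = {}"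
    by (auto simp: T_edge_def)
  ultimately show ?thesis using assms unfolding loose_path_def by simp
qed

lemma T_spine_hdist_ge:
  assumes "i \<in> {1..T_ell n a b}" "j \<in> {1..T_ell n a b}"
  shows "\<bar>real i - real j\<bar> \<le> real (hdist (T_edges n a b) (Vv i) (Vv j))"
proof -
  have ordered: "\<bar>real i - real j\<bar> \<le> real (hdist (T_edges n a b) (Vv i) (Vv j))"
    if "1 \<le> i" "i \<le> j" "j \<le> T_ell n a b" for i j
  proof -
    have "\<bar>int (tvert_index (Vv j)) - int (tvert_index (Vv i))\<bar>
        \<le> int (hdist (T_edges n a b) (Vv i) (Vv j))"
      by (rule potential_diff_le_hdist[OF T_spine_loose_path[OF that]])
        (use that in \<open>simp_all add: T_edges_index_diff_le_1 hd_map last_map del: upt_Suc\<close>)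
    then show ?thesis by simp
  qed
  show ?thesis
  proof (cases "i \<le> j")
    case True
    with assms show ?thesis by (intro ordered) auto
  next
    case False
    with assms have "\<bar>real j - real i\<bar> \<le> real (hdist (T_edges n a b) (Vv j) (Vv i))"
      by (intro ordered) auto
    then show ?thesis by (simp add: abs_minus_commute hdist_commute)
  qed
qed

lemma sum_abs_diff_atLeastAtMost:
  "3 * (\<Sum>i = 1..l. \<Sum>j = 1..l. \<bar>real i - real j\<bar>) = real l ^ 3 - real l"
proof (induction l)
  case (Suc l)
  have gauss: "2 * (\<Sum>i = 1..l. real (Suc l) - real i) = real l * (real l + 1)"
    using double_gauss_sum_from_Suc_0[of l, where 'a = real]
    by (simp add: sum_subtractf algebra_simps)
  have "(\<Sum>i = 1..Suc l. \<Sum>j = 1..Suc l. \<bar>real i - real j\<bar>)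
      = (\<Sum>i = 1..l. \<Sum>j = 1..l. \<bar>real i - real j\<bar>) + 2 * (\<Sum>i = 1..l. real (Suc l) - real i)"
    by (simp add: sum.cl_ivl_Suc sum.distrib)
  then show ?case
    using Suc.IH gauss by (simp add: power3_eq_cube algebra_simps)
qed simp

lemma rho_T_ge:
  assumes "1 \<le> T_ell n a b"
  shows "((real (T_ell n a b))\<^sup>2 - 1) / 3 \<le> rho_T n a b"
proof -
  define l where "l = T_ell n a b"
  define V where "V = T_verts n a b"
  define d where "d = (\<lambda>u v. real (hdist (T_edges n a b) u v))"
  define S where "S = Vv ` {1..l}"
  have fin: "finite V" by (simp add: V_def T_verts_def T_I_def)
  have SV: "S \<subseteq> V" by (auto simp: S_def V_def T_verts_def l_def)
  have card: "card S = l" by (simp add: S_def card_image inj_on_def)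
  have rho: "rho_T n a b = Max (Collect (kernel_eigenvalue V d))"
    by (simp add: rho_T_def dist_rho_def V_def d_def dist_eigenvalue_eq_kernel_eigenvalue)
  have "real l ^ 3 - real l = 3 * (\<Sum>i = 1..l. \<Sum>j = 1..l. \<bar>real i - real j\<bar>)"
    by (rule sum_abs_diff_atLeastAtMost[symmetric])
  also have "\<dots> \<le> 3 * (\<Sum>i = 1..l. \<Sum>j = 1..l. d (Vv i) (Vv j))"
    using T_spine_hdist_ge by (auto simp: d_def l_def intro!: sum_mono)
  also have "\<dots> = 3 * (\<Sum>u\<in>S. \<Sum>v\<in>S. d u v)"
    by (simp add: S_def sum.reindex inj_on_def)
  also have "\<dots> = 3 * bilinear_form V d (\<lambda>v. of_bool (v \<in> S)) (\<lambda>v. of_bool (v \<in> S))"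
    by (simp add: bilinear_form_indicator[OF fin SV])
  also have "\<dots> \<le> 3 * (Max (Collect (kernel_eigenvalue V d)) * sq_norm V (\<lambda>v. of_bool (v \<in> S)))"
    using SV assms
    by (intro mult_left_mono bilinear_form_le_Max_kernel_eigenvalue[OF fin])
      (auto simp: S_def d_def l_def hdist_commute)
  also have "\<dots> = real l * (3 * rho_T n a b)"
    by (simp add: sq_norm_indicator[OF fin SV] card rho)
  finally have "real l * (real l ^ 2 - 1) \<le> real l * (3 * rho_T n a b)"
    by (simp add: power2_eq_square power3_eq_cube algebra_simps)
  then show ?thesis using assms by (simp add: l_def)
qed

lemma sum_minus_double_index_le:
  fixes R :: real
  assumes "1 < R"
  shows "R / (R - 1) * (\<Sum>i = 1..m. R - 2 * real i) \<le> R * (R - 1) / 4"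
proof -
  have "(\<Sum>i = 1..m. R - 2 * real i) = real m * R - real m * (real m + 1)"
    by (induction m) (auto simp: algebra_simps)
  also have "\<dots> \<le> (R - 1)\<^sup>2 / 4"
    using zero_le_power2[of "R - 2 * real m - 1"] by (simp add: power2_eq_square algebra_simps)
  finally have "R / (R - 1) * (\<Sum>i = 1..m. R - 2 * real i) \<le> R / (R - 1) * ((R - 1)\<^sup>2 / 4)"
    using assms by (intro mult_left_mono) auto
  also have "\<dots> = R * (R - 1) / 4" using assms by (simp add: power2_eq_square field_simps)
  finally show ?thesis .
qed

lemma mul_pred_add_quarter_lt_third_pred_sq:
  fixes L R s :: real
  assumes "R + s + 1 \<le> L" "0 < R" "0 \<le> s"
  shows "s * (R - 1) + R * (R - 1) / 4 < (L\<^sup>2 - 1) / 3"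
proof -
  have "(R + s + 1)\<^sup>2 \<le> L\<^sup>2" using assms by (intro power_mono) auto
  moreover have "0 \<le> (R - 2 * s)\<^sup>2" by simp
  ultimately have "12 * s * (R - 1) + 3 * R * (R - 1) < 4 * (L\<^sup>2 - 1)"
    using assms unfolding power2_eq_square by (simp add: algebra_simps)
  then show ?thesis by (simp add: field_simps)
qed

theorem lemma3p4:
  fixes n a b :: nat
  assumes "b \<ge> a + 2"
    and "2 * (a + b) < n - 1"
    and "real b < real (n - a - b) / 2"
  shows "rho_T n a b >
     (2 * real a + 1) * (real (n - a - b - b - a) - 1)
     + real (n - a - b - b - a) / (real (n - a - b - b - a) - 1)
       * (\<Sum>i = 1..(n - a - b - b - a - 1) div 2. real (n - a - b - b - a) - 2 * real i)"
proof -
  define r where "r = n - a - b - b - a"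
  have l: "real (T_ell n a b) = real r + real a + real b" and "2 \<le> r"
    using assms(2) by (auto simp: r_def T_ell_def)
  have "real r / (real r - 1) * (\<Sum>i = 1..(r - 1) div 2. real r - 2 * real i)
      \<le> real r * (real r - 1) / 4"
    using \<open>2 \<le> r\<close> by (intro sum_minus_double_index_le) simp
  moreover have "(2 * real a + 1) * (real r - 1) + real r * (real r - 1) / 4
      < ((real (T_ell n a b))\<^sup>2 - 1) / 3"
    using l assms(1) \<open>2 \<le> r\<close> by (intro mul_pred_add_quarter_lt_third_pred_sq) auto
  moreover have "((real (T_ell n a b))\<^sup>2 - 1) / 3 \<le> rho_T n a b"
    using l \<open>2 \<le> r\<close> by (intro rho_T_ge) simp
  ultimately show ?thesis by (simp add: r_def)
qed

end
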